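(* There is a positive absolute constant $C_0$ such that for every $n\geq 2$, every domain $D$ in $\mathbb{R}^n$ such that $\mathbb{R}^n\setminus D$ contains at least two points, and all $z,w\in D$, $$d''_D(z,w)\leq d'_D(z,w)\leq d_D(z,w)\leq C_0\, d''_D(z,w).$$
   Context: Write $d(z,\partial D)=\inf\{|z-a|:a\in\partial D\}$ and $Q(z;a,b)=|z-a|\big(1+\big|\log\frac{|a-b|}{|z-a|}\big|\big)$ (equal to $+\infty$ when $a=b$). For $z\in D$ define $1/\lambda_D(z)=\inf\{Q(z;a,b): a,b\in\mathbb{R}^n\setminus D\}$, $1/\lambda'_D(z)=\inf\{Q(z;a,b): a,b\in\partial D\}$, $1/\lambda''_D(z)=\inf\{Q(z;a,b): a,b\in\partial D,\ |z-a|=d(z,\partial D)\}$. For $z,w\in D$ set $d_D(z,w)=\inf_\gamma\int_\gamma\lambda_D(t)|dt|$, $d'_D(z,w)=\inf_\gamma\int_\gamma\lambda'_D(t)|dt|$, $d''_D(z,w)=\inf_\gamma\int_\gamma\lambda''_D(t)|dt|$, the infima over all rectifiable arcs $\gamma$ joining $z$ to $w$ in $D$. *)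

theory Defs
  imports "HOL-Analysis.Analysis"
begin

text \<open>Euclidean space R^n is represented, as in the library theory
Abstract_Euclidean_Space, by the points of type nat => real vanishing from
index n on, with the topology Euclidean_space n.\<close>

definition edist :: "nat \<Rightarrow> (nat \<Rightarrow> real) \<Rightarrow> (nat \<Rightarrow> real) \<Rightarrow> real" where
  "edist n x y = L2_set (\<lambda>i. x i - y i) {..<n}"

definition setdist_pt :: "nat \<Rightarrow> (nat \<Rightarrow> real) \<Rightarrow> (nat \<Rightarrow> real) set \<Rightarrow> real" where
  "setdist_pt n z A = Inf {edist n z a | a. a \<in> A}"

text \<open>Q(z;a,b) for a \<noteq> b (it is +infinity for a = b, so such pairs never matter
for the infima below, which range over sets with at least two points).\<close>
definition Qf :: "nat \<Rightarrow> (nat \<Rightarrow> real) \<Rightarrow> (nat \<Rightarrow> real) \<Rightarrow> (nat \<Rightarrow> real) \<Rightarrow> real" where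
  "Qf n z a b = edist n z a * (1 + \<bar>ln (edist n a b / edist n z a)\<bar>)"

definition bdry :: "nat \<Rightarrow> (nat \<Rightarrow> real) set \<Rightarrow> (nat \<Rightarrow> real) set" where
  "bdry n D = Euclidean_space n frontier_of D"

definition compl :: "nat \<Rightarrow> (nat \<Rightarrow> real) set \<Rightarrow> (nat \<Rightarrow> real) set" where
  "compl n D = topspace (Euclidean_space n) - D"

definition lam :: "nat \<Rightarrow> (nat \<Rightarrow> real) set \<Rightarrow> (nat \<Rightarrow> real) \<Rightarrow> real" where
  "lam n D z = 1 / Inf {Qf n z a b | a b. a \<in> compl n D \<and> b \<in> compl n D \<and> a \<noteq> b}"

definition lam' :: "nat \<Rightarrow> (nat \<Rightarrow> real) set \<Rightarrow> (nat \<Rightarrow> real) \<Rightarrow> real" where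
  "lam' n D z = 1 / Inf {Qf n z a b | a b. a \<in> bdry n D \<and> b \<in> bdry n D \<and> a \<noteq> b}"

definition lam'' :: "nat \<Rightarrow> (nat \<Rightarrow> real) set \<Rightarrow> (nat \<Rightarrow> real) \<Rightarrow> real" where
  "lam'' n D z = 1 / Inf {Qf n z a b | a b. a \<in> bdry n D \<and> b \<in> bdry n D \<and> a \<noteq> b
                                        \<and> edist n z a = setdist_pt n z (bdry n D)}"

definition plen :: "nat \<Rightarrow> (real \<Rightarrow> nat \<Rightarrow> real) \<Rightarrow> real \<Rightarrow> real \<Rightarrow> ennreal" where
  "plen n g s t = (SUP ts \<in> {ts. sorted ts \<and> set ts \<subseteq> {s..t}}.
      ennreal (\<Sum>i<length ts - 1. edist n (g (ts ! i)) (g (ts ! Suc i))))"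

definition rectifiable :: "nat \<Rightarrow> (real \<Rightarrow> nat \<Rightarrow> real) \<Rightarrow> bool" where
  "rectifiable n g \<longleftrightarrow> plen n g 0 1 < \<infinity>"

definition arclen :: "nat \<Rightarrow> (real \<Rightarrow> nat \<Rightarrow> real) \<Rightarrow> real \<Rightarrow> real" where
  "arclen n g t = enn2real (plen n g 0 (max 0 (min 1 t)))"

text \<open>Line integral with respect to arc length: the integral of rho(g t) with
respect to the Lebesgue-Stieltjes measure of the arc-length function.\<close>
definition line_int :: "nat \<Rightarrow> ((nat \<Rightarrow> real) \<Rightarrow> real) \<Rightarrow> (real \<Rightarrow> nat \<Rightarrow> real) \<Rightarrow> ennreal" where
  "line_int n \<rho> g = (\<integral>\<^sup>+ t. ennreal (\<rho> (g t)) * indicator {0..1} t \<partial>interval_measure (arclen n g))"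

definition joins :: "nat \<Rightarrow> (nat \<Rightarrow> real) set \<Rightarrow> (nat \<Rightarrow> real) \<Rightarrow> (nat \<Rightarrow> real) \<Rightarrow> (real \<Rightarrow> nat \<Rightarrow> real) set" where
  "joins n D z w = {g. pathin (Euclidean_space n) g \<and> g ` {0..1} \<subseteq> D \<and> g 0 = z \<and> g 1 = w
                       \<and> rectifiable n g}"

definition dist_rho :: "nat \<Rightarrow> (nat \<Rightarrow> real) set \<Rightarrow> ((nat \<Rightarrow> real) \<Rightarrow> real) \<Rightarrow> (nat \<Rightarrow> real) \<Rightarrow> (nat \<Rightarrow> real) \<Rightarrow> ennreal" where
  "dist_rho n D \<rho> z w = (INF g \<in> joins n D z w. line_int n \<rho> g)"

definition domain_in :: "nat \<Rightarrow> (nat \<Rightarrow> real) set \<Rightarrow> bool" where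
  "domain_in n D \<longleftrightarrow> openin (Euclidean_space n) D \<and> connectedin (Euclidean_space n) D \<and> D \<noteq> {}"

end

theory Submission
  imports Defs
begin

text \<open>At every point z of D the densities satisfy lam'' \<le> lam' \<le> lam \<le> 3 lam'', and these
pointwise bounds pass to the path integrals.  The first two inequalities hold because the
infima defining the densities range over shrinking sets.  For the last one, let a0 be a boundary
point closest to z, at distance d.  Given a \<noteq> b outside D, the triangle inequality controls
|a - a0| and |b - a0| in terms of r = |z - a| \<ge> d and s = |a - b|, and an elementary logarithmic
estimate yields c \<in> {a, b} with d (1 + |log (|c - a0| / d)|) \<le> 3 Q(z; a, b).  To replace c by a
boundary point, follow a path from z to c along which the distance to a0 changes linearly
(a rotation about a0, available since n \<ge> 2): it leaves D at a point b' whose distance to a0 lies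
between d and |c - a0|, so Q(z; a0, b') \<le> 3 Q(z; a, b).\<close>

section \<open>Euclidean distance and the boundary\<close>

abbreviation Rn :: "nat \<Rightarrow> (nat \<Rightarrow> real) set" where
  "Rn n \<equiv> topspace (Euclidean_space n)"

lemma edist_nonneg [simp]: "0 \<le> edist n x y"
  by (simp add: edist_def)

lemma edist_commute: "edist n x y = edist n y x"
  unfolding edist_def L2_set_def by (simp add: power2_commute)

lemma edist_self [simp]: "edist n x x = 0"
  by (simp add: edist_def L2_set_0')

lemma edist_triangle: "edist n x z \<le> edist n x y + edist n y z"
  using L2_set_triangle_ineq[of "\<lambda>i. x i - y i" "\<lambda>i. y i - z i" "{..<n}"]
  by (simp add: edist_def)

lemma power2_edist: "(edist n x y)\<^sup>2 = (\<Sum>i<n. (x i - y i)\<^sup>2)"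
  by (simp add: edist_def L2_set_def sum_nonneg)

lemma abs_component_le_edist: "i < n \<Longrightarrow> \<bar>x i - y i\<bar> \<le> edist n x y"
  using member_le_L2_set[of "{..<n}" i "\<lambda>j. \<bar>x j - y j\<bar>"]
  by (simp add: edist_def L2_set_def)

lemma edist_eq_0_iff:
  assumes "x \<in> Rn n" "y \<in> Rn n"
  shows "edist n x y = 0 \<longleftrightarrow> x = y"
proof
  assume "edist n x y = 0"
  then have "\<forall>i<n. x i = y i"
    by (simp add: edist_def L2_set_eq_0_iff)
  with assms show "x = y"
    by (auto simp: topspace_Euclidean_space intro!: ext) (metis not_le)
qed simp

lemma edist_pos: "x \<in> Rn n \<Longrightarrow> y \<in> Rn n \<Longrightarrow> x \<noteq> y \<Longrightarrow> 0 < edist n x y"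
  using edist_eq_0_iff edist_nonneg by (metis order_le_less)

lemma continuous_map_edist: "continuous_map (Euclidean_space n) euclideanreal (edist n z)"
proof -
  have "continuous_map (powertop_real UNIV) euclideanreal (\<lambda>x. sqrt (\<Sum>i<n. (z i - x i)\<^sup>2))"
    by (intro continuous_intros continuous_map_product_projection) auto
  then show ?thesis
    unfolding Euclidean_space_def edist_def L2_set_def by (rule continuous_map_from_subtopology)
qed

lemma continuous_map_Euclidean_space_componentwise:
  assumes "\<And>i. continuous_on S (\<lambda>t. g t i)" and "g ` S \<subseteq> Rn n"
  shows "continuous_map (top_of_set S) (Euclidean_space n) g"
  using assms unfolding Euclidean_space_def continuous_map_in_subtopology
  by (auto simp: continuous_map_componentwise_UNIV)

lemma path_meets_frontier_of:
  assumes "continuous_map (top_of_set {0..1::real}) X g" "g 0 \<in> D" "g 1 \<notin> D"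
  shows "\<exists>t\<in>{0..1}. g t \<in> X frontier_of D"
proof -
  have "connectedin X (g ` {0..1})"
    using connectedin_continuous_map_image[OF assms(1)] by (simp add: connectedin_topspace connected_Icc)
  moreover have "g ` {0..1} \<inter> D \<noteq> {}"
    using assms(2) by force
  moreover have "g ` {0..1} - D \<noteq> {}"
    using assms(3) by (metis Diff_iff atLeastAtMost_iff empty_iff image_eqI order_refl zero_le_one)
  ultimately show ?thesis
    using connectedin_Int_frontier_of by blast
qed

lemma compactin_edist_cball: "compactin (Euclidean_space n) {x \<in> Rn n. edist n z x \<le> R}"
proof (rule closed_compactin)
  define S where "S = (\<lambda>i. if i < n then {z i - R .. z i + R} else {0::real})"
  have "compactin (powertop_real UNIV) (PiE UNIV S)"
    by (simp add: compactin_PiE S_def)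
  moreover have "PiE UNIV S \<subseteq> Rn n"
    by (auto simp: S_def topspace_Euclidean_space PiE_iff split: if_splits)
  ultimately show "compactin (Euclidean_space n) (PiE UNIV S)"
    by (simp add: Euclidean_space_def compactin_subtopology topspace_Euclidean_space)
  show "{x \<in> Rn n. edist n z x \<le> R} \<subseteq> PiE UNIV S"
  proof clarify
    fix x assume "x \<in> Rn n" "edist n z x \<le> R"
    then have "x i \<in> S i" for i
      using abs_component_le_edist[of i n z x]
      by (auto simp: S_def topspace_Euclidean_space abs_le_iff)
    then show "x \<in> PiE UNIV S"
      by (simp add: PiE_iff)
  qed
  show "closedin (Euclidean_space n) {x \<in> Rn n. edist n z x \<le> R}"
    using closedin_continuous_map_preimage[OF continuous_map_edist, of "{..R}"] by simp
qed

lemma closest_point_exists: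
  assumes F: "closedin (Euclidean_space n) F" "b0 \<in> F"
  shows "\<exists>a\<in>F. \<forall>b\<in>F. edist n z a \<le> edist n z b"
proof -
  define K where "K = F \<inter> {x \<in> Rn n. edist n z x \<le> edist n z b0}"
  have "compactin euclideanreal (edist n z ` K)"
    unfolding K_def
    by (intro image_compactin[OF _ continuous_map_edist] closed_Int_compactin F compactin_edist_cball)
  moreover have "b0 \<in> K"
    using F closedin_subset by (fastforce simp: K_def)
  ultimately obtain a where "a \<in> K" and amin: "\<forall>b\<in>K. edist n z a \<le> edist n z b"
    using compact_attains_inf[of "edist n z ` K"] by auto
  moreover have "edist n z a \<le> edist n z b" if "b \<in> F" "b \<notin> K" for b
  proof -
    have "edist n z b0 < edist n z b"
      using that closedin_subset[OF F(1)] by (auto simp: K_def)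
    then show ?thesis
      using amin \<open>b0 \<in> K\<close> by fastforce
  qed
  ultimately show ?thesis
    by (metis IntE K_def)
qed

lemma segment_meets_frontier_of:
  assumes "z \<in> D" "z \<in> Rn n" "a \<in> Rn n" "a \<notin> D"
  shows "\<exists>q\<in>Euclidean_space n frontier_of D. edist n z q \<le> edist n z a"
proof -
  define g where "g = (\<lambda>t::real. \<lambda>i. z i + t * (a i - z i))"
  have "continuous_map (top_of_set {0..1}) (Euclidean_space n) g"
    using assms(2,3) unfolding g_def
    by (intro continuous_map_Euclidean_space_componentwise continuous_intros)
       (auto simp: topspace_Euclidean_space)
  moreover have "g 0 = z" "g 1 = a"
    by (auto simp: g_def)
  ultimately obtain t where t: "t \<in> {0..1}" "g t \<in> Euclidean_space n frontier_of D"
    using path_meets_frontier_of assms(1,4) by metis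
  have "edist n z (g t) = t * edist n z a"
    using t(1) by (simp add: edist_def g_def L2_set_right_distrib algebra_simps)
  also have "\<dots> \<le> edist n z a"
    using t(1) by (simp add: mult_left_le_one_le)
  finally show ?thesis
    using t(2) by blast
qed

section \<open>Paths with prescribed distance to a point\<close>

lemma sum_power2_lincomb:
  fixes a b :: real
  shows "(\<Sum>i\<in>A. (a * x i + b * y i)\<^sup>2)
    = a\<^sup>2 * (\<Sum>i\<in>A. (x i)\<^sup>2) + 2 * a * b * (\<Sum>i\<in>A. x i * y i) + b\<^sup>2 * (\<Sum>i\<in>A. (y i)\<^sup>2)"
proof -
  have "(a * x i + b * y i)\<^sup>2 = a\<^sup>2 * (x i)\<^sup>2 + 2 * a * b * (x i * y i) + b\<^sup>2 * (y i)\<^sup>2" for i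
    by (simp add: power2_eq_square algebra_simps)
  then show ?thesis
    by (simp add: sum.distrib sum_distrib_left)
qed

lemma sum_lessThan_supported_01:
  fixes n :: nat
  assumes "2 \<le> n" "\<And>i. i \<noteq> 0 \<Longrightarrow> i \<noteq> 1 \<Longrightarrow> f i = 0"
  shows "(\<Sum>i<n. f i) = f 0 + (f 1 :: real)"
proof -
  have "(\<Sum>i<n. f i) = (\<Sum>i\<in>{0,1}. f i)"
    by (rule sum.mono_neutral_right) (use assms in auto)
  then show ?thesis
    by simp
qed

lemma exists_unit_orthogonal:
  assumes n: "2 \<le> n"
  shows "\<exists>w\<in>Rn n. (\<Sum>i<n. (w i)\<^sup>2) = 1 \<and> (\<Sum>i<n. u i * w i) = 0"
proof (cases "u 0 = 0 \<and> u 1 = 0")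
  case True
  define w where "w = (\<lambda>i::nat. if i = 0 then 1 else 0 :: real)"
  have "(\<Sum>i<n. (w i)\<^sup>2) = 1" "(\<Sum>i<n. u i * w i) = 0"
    using sum_lessThan_supported_01[OF n, of "\<lambda>i. (w i)\<^sup>2"]
      sum_lessThan_supported_01[OF n, of "\<lambda>i. u i * w i"] True
    by (simp_all add: w_def)
  moreover have "w \<in> Rn n"
    using n by (simp add: w_def topspace_Euclidean_space)
  ultimately show ?thesis
    by blast
next
  case False
  define m where "m = sqrt ((u 0)\<^sup>2 + (u 1)\<^sup>2)"
  have m: "m > 0" "m\<^sup>2 = (u 0)\<^sup>2 + (u 1)\<^sup>2"
    using False by (simp_all add: m_def sum_power2_gt_zero_iff)
  \<comment> \<open>rotate the projection of u onto the first two coordinates by a right angle\<close>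
  define w where "w = (\<lambda>i::nat. if i = 0 then - u 1 / m else if i = 1 then u 0 / m else 0)"
  have "(\<Sum>i<n. (w i)\<^sup>2) = ((u 0)\<^sup>2 + (u 1)\<^sup>2) / m\<^sup>2"
    using sum_lessThan_supported_01[OF n, of "\<lambda>i. (w i)\<^sup>2"]
    by (simp add: w_def power_divide add_divide_distrib)
  also have "\<dots> = 1"
    using m by (metis divide_self less_irrefl power_not_zero)
  finally have "(\<Sum>i<n. (w i)\<^sup>2) = 1" .
  moreover have "(\<Sum>i<n. u i * w i) = 0"
    using sum_lessThan_supported_01[OF n, of "\<lambda>i. u i * w i"] m(1)
    by (simp add: w_def field_simps)
  moreover have "w \<in> Rn n"
    using n by (simp add: w_def topspace_Euclidean_space)
  ultimately show ?thesis
    by blast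
qed

lemma orthogonal_remainder:
  fixes u v :: "nat \<Rightarrow> real"
  assumes u1: "(\<Sum>i<n. (u i)\<^sup>2) = 1" and v1: "(\<Sum>i<n. (v i)\<^sup>2) = 1"
    and c: "c = (\<Sum>i<n. u i * v i)"
  shows "(\<Sum>i<n. (v i - c * u i)\<^sup>2) = 1 - c\<^sup>2" "(\<Sum>i<n. u i * (v i - c * u i)) = 0"
proof -
  have "(\<Sum>i<n. (v i - c * u i)\<^sup>2) = (\<Sum>i<n. (1 * v i + (- c) * u i)\<^sup>2)"
    by simp
  also have "\<dots> = 1 - c\<^sup>2"
    unfolding sum_power2_lincomb using u1 v1 c by (simp add: mult.commute power2_eq_square)
  finally show "(\<Sum>i<n. (v i - c * u i)\<^sup>2) = 1 - c\<^sup>2" .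
  have "(\<Sum>i<n. u i * (v i - c * u i)) = (\<Sum>i<n. u i * v i - c * (u i)\<^sup>2)"
    by (simp add: algebra_simps power2_eq_square)
  also have "\<dots> = c - c * 1"
    using u1 c[symmetric] by (simp add: sum_subtractf flip: sum_distrib_left)
  finally show "(\<Sum>i<n. u i * (v i - c * u i)) = 0"
    by simp
qed

lemma unit_vector_cos_sin_decomposition:
  assumes n: "2 \<le> n" and uv: "u \<in> Rn n" "v \<in> Rn n"
    and u1: "(\<Sum>i<n. (u i)\<^sup>2) = 1" and v1: "(\<Sum>i<n. (v i)\<^sup>2) = 1"
  shows "\<exists>w\<in>Rn n. \<exists>\<alpha>. (\<Sum>i<n. (w i)\<^sup>2) = 1 \<and> (\<Sum>i<n. u i * w i) = 0
           \<and> (\<forall>i. v i = cos \<alpha> * u i + sin \<alpha> * w i)"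
proof -
  define c where "c = (\<Sum>i<n. u i * v i)"
  define d where "d = (\<lambda>i. v i - c * u i)"
  have d: "(\<Sum>i<n. (d i)\<^sup>2) = 1 - c\<^sup>2" "(\<Sum>i<n. u i * d i) = 0"
    using orthogonal_remainder[OF u1 v1 c_def] by (simp_all add: d_def)
  moreover have "0 \<le> (\<Sum>i<n. (d i)\<^sup>2)"
    by (simp add: sum_nonneg)
  ultimately have "\<bar>c\<bar> \<le> 1"
    using abs_le_square_iff[of c 1] by simp
  define \<alpha> where "\<alpha> = arccos c"
  have cos: "cos \<alpha> = c" and sin: "sin \<alpha> = sqrt (1 - c\<^sup>2)"
    using \<open>\<bar>c\<bar> \<le> 1\<close> by (simp_all add: \<alpha>_def sin_arccos abs_le_iff)
  have dT: "d \<in> Rn n"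
    using uv by (simp add: d_def topspace_Euclidean_space)
  show ?thesis
  proof (cases "sin \<alpha> = 0")
    case True
    then have "\<forall>i\<in>{..<n}. (d i)\<^sup>2 = 0"
      using d(1) sin by (simp add: sum_nonneg_eq_0_iff)
    then have "d = (\<lambda>i. 0)"
      using dT by (auto simp: topspace_Euclidean_space intro!: ext) (metis lessThan_iff not_le)
    moreover obtain w where "w \<in> Rn n" "(\<Sum>i<n. (w i)\<^sup>2) = 1" "(\<Sum>i<n. u i * w i) = 0"
      using exists_unit_orthogonal[OF n] by blast
    ultimately show ?thesis
      using True cos by (auto simp: d_def fun_eq_iff intro!: bexI[of _ w] exI[of _ \<alpha>])
  next
    case False
    define w where "w = (\<lambda>i. d i / sin \<alpha>)"
    have "(\<Sum>i<n. (w i)\<^sup>2) = (\<Sum>i<n. (d i)\<^sup>2) / (sin \<alpha>)\<^sup>2"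
      by (simp add: w_def power_divide sum_divide_distrib)
    also have "\<dots> = 1"
      using False \<open>\<bar>c\<bar> \<le> 1\<close> d(1) sin by (simp add: abs_square_le_1)
    finally have "(\<Sum>i<n. (w i)\<^sup>2) = 1" .
    moreover have "(\<Sum>i<n. u i * w i) = 0"
      using d(2) by (simp add: w_def flip: sum_divide_distrib)
    moreover have "w \<in> Rn n"
      using dT by (simp add: w_def topspace_Euclidean_space)
    moreover have "\<forall>i. v i = cos \<alpha> * u i + sin \<alpha> * w i"
      using False cos by (simp add: w_def d_def)
    ultimately show ?thesis
      by blast
  qed
qed

lemma sum_power2_unit_direction:
  assumes "x \<in> Rn n" "a \<in> Rn n" "x \<noteq> a"
  shows "(\<Sum>i<n. ((x i - a i) / edist n x a)\<^sup>2) = 1"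
  using edist_pos[OF assms]
  by (simp add: power_divide flip: sum_divide_distrib power2_edist)

lemma exists_path_with_linear_distance:
  assumes n: "2 \<le> n" and pts: "z \<in> Rn n" "c \<in> Rn n" "a \<in> Rn n" and "z \<noteq> a" "c \<noteq> a"
  shows "\<exists>g. continuous_map (top_of_set {0..1}) (Euclidean_space n) g \<and> g 0 = z \<and> g 1 = c
           \<and> (\<forall>t\<in>{0..1}. edist n (g t) a = (1 - t) * edist n z a + t * edist n c a)"
proof -
  define P where "P = edist n z a"
  define R where "R = edist n c a"
  have PR: "0 < P" "0 < R"
    using edist_pos assms by (auto simp: P_def R_def)
  define u where "u = (\<lambda>i. (z i - a i) / P)"
  define v where "v = (\<lambda>i. (c i - a i) / R)"
  have "u \<in> Rn n" "v \<in> Rn n"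
    using pts by (auto simp: u_def v_def topspace_Euclidean_space)
  moreover have "(\<Sum>i<n. (u i)\<^sup>2) = 1" "(\<Sum>i<n. (v i)\<^sup>2) = 1"
    using sum_power2_unit_direction assms by (auto simp: u_def v_def P_def R_def)
  ultimately obtain w \<alpha> where w: "w \<in> Rn n" "(\<Sum>i<n. (w i)\<^sup>2) = 1" "(\<Sum>i<n. u i * w i) = 0"
    and v: "\<forall>i. v i = cos \<alpha> * u i + sin \<alpha> * w i"
    using unit_vector_cos_sin_decomposition[OF n] by blast
  \<comment> \<open>rotate from direction u to direction v in the plane spanned by u and w,
    interpolating the radius linearly\<close>
  define g where "g = (\<lambda>t i. a i + ((1 - t) * P + t * R) * (cos (t * \<alpha>) * u i + sin (t * \<alpha>) * w i))"
  have "continuous_map (top_of_set {0..1}) (Euclidean_space n) g"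
    using pts \<open>u \<in> Rn n\<close> w(1) unfolding g_def
    by (intro continuous_map_Euclidean_space_componentwise continuous_intros)
       (auto simp: topspace_Euclidean_space)
  moreover have "g 0 = z"
    using PR by (simp add: g_def u_def fun_eq_iff)
  moreover have "g 1 = c"
    using PR v[rule_format, symmetric] by (simp add: g_def v_def fun_eq_iff)
  moreover have "edist n (g t) a = (1 - t) * P + t * R" if "t \<in> {0..1}" for t
  proof -
    have "0 \<le> (1 - t) * P + t * R"
      using that PR by auto
    moreover have "L2_set (\<lambda>i. cos (t * \<alpha>) * u i + sin (t * \<alpha>) * w i) {..<n} = 1"
      unfolding L2_set_def sum_power2_lincomb \<open>(\<Sum>i<n. (u i)\<^sup>2) = 1\<close> w(2,3) by simp
    ultimately show ?thesis
      by (simp add: edist_def g_def flip: L2_set_right_distrib)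
  qed
  ultimately show ?thesis
    unfolding P_def R_def by blast
qed

lemma frontier_point_at_intermediate_distance:
  assumes n: "2 \<le> n" and z: "z \<in> D" "z \<in> Rn n" and c: "c \<in> Rn n" "c \<notin> D"
    and a: "a \<in> Rn n" "z \<noteq> a" "c \<noteq> a"
  shows "\<exists>b\<in>Euclidean_space n frontier_of D. min (edist n z a) (edist n c a) \<le> edist n b a
           \<and> edist n b a \<le> max (edist n z a) (edist n c a)"
proof -
  obtain g where g: "continuous_map (top_of_set {0..1}) (Euclidean_space n) g" "g 0 = z" "g 1 = c"
    and dist_g: "\<forall>t\<in>{0..1}. edist n (g t) a = (1 - t) * edist n z a + t * edist n c a"
    using exists_path_with_linear_distance[OF n z(2) c(1) a] by blast
  then obtain t where t: "t \<in> {0..1}" "g t \<in> Euclidean_space n frontier_of D"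
    using path_meets_frontier_of z(1) c(2) by metis
  have "(1 - t) * edist n z a + t * edist n c a \<le> max (edist n z a) (edist n c a)"
    using t(1) by (intro convex_bound_le) auto
  moreover have "min (edist n z a) (edist n c a) \<le> (1 - t) * edist n z a + t * edist n c a"
    using convex_bound_le[of "- edist n z a" "- min (edist n z a) (edist n c a)" "- edist n c a" "1 - t" t]
      t(1) by auto
  ultimately show ?thesis
    using t dist_g by metis
qed

section \<open>The logarithmic estimate\<close>

definition Qdist :: "real \<Rightarrow> real \<Rightarrow> real" where
  "Qdist r s = r * (1 + \<bar>ln (s / r)\<bar>)"

lemma Qf_eq_Qdist: "Qf n z a b = Qdist (edist n z a) (edist n a b)"
  by (simp add: Qf_def Qdist_def)

lemma le_Qdist: "0 \<le> r \<Longrightarrow> r \<le> Qdist r s"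
  unfolding Qdist_def using mult_left_mono[of 1 "1 + \<bar>ln (s / r)\<bar>" r] by simp

lemma Qdist_le_between:
  assumes "0 < d" "0 < t'" "min d t' \<le> t" "t \<le> max d t'"
  shows "Qdist d t \<le> Qdist d t'"
proof -
  have "0 < t"
    using assms by (auto simp: min_def split: if_splits)
  then have "\<bar>ln (t / d)\<bar> \<le> \<bar>ln (t' / d)\<bar>"
    using assms by (auto simp: ln_div min_def max_def split: if_splits)
  then show ?thesis
    using assms(1) by (simp add: Qdist_def)
qed

lemma abs_ln_le_ln2: "1 / 2 \<le> (x::real) \<Longrightarrow> x \<le> 2 \<Longrightarrow> \<bar>ln x\<bar> \<le> ln 2"
proof -
  assume x: "1 / 2 \<le> x" "x \<le> 2"
  then have "ln (1 / 2) \<le> ln x" "ln x \<le> ln 2"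
    by (simp_all add: ln_mono)
  then show ?thesis
    by (simp add: ln_div)
qed

lemma Qdist_le_3_far:
  assumes d: "0 < d" "d \<le> r" and t: "d / 2 \<le> t" "t \<le> d + r"
  shows "Qdist d t \<le> 3 * Qdist r s"
proof -
  have "\<bar>ln (t / d)\<bar> \<le> ln 2 + (r / d - 1)"
  proof (cases "d \<le> t")
    case True
    have "ln (t / d) \<le> ln (2 * (r / d))"
      using d t by (simp add: divide_right_mono)
    also have "\<dots> = ln 2 + ln (r / d)"
      using d by (intro ln_mult_pos) auto
    also have "ln (r / d) \<le> r / d - 1"
      using d by (intro ln_le_minus_one) simp
    finally show ?thesis
      using True d by simp
  next
    case False
    then have "\<bar>ln (t / d)\<bar> = ln (d / t)"
      using d t by (simp add: ln_div)
    also have "\<dots> \<le> ln 2"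
      using d t by (simp add: divide_le_eq mult.commute)
    moreover have "1 \<le> r / d"
      using d by simp
    ultimately show ?thesis
      by simp
  qed
  then have "Qdist d t \<le> d * (1 + (ln 2 + (r / d - 1)))"
    using d by (simp add: Qdist_def)
  also have "\<dots> = d * ln 2 + r"
    using d by (simp add: algebra_simps)
  also have "\<dots> \<le> 2 * r"
  proof -
    have "d * ln 2 \<le> d * 1"
      using d ln_2_less_1 by (intro mult_left_mono) auto
    then show ?thesis
      using d by linarith
  qed
  also have "\<dots> \<le> 3 * Qdist r s"
    using le_Qdist[of r s] d by simp
  finally show ?thesis .
qed

lemma Qdist_le_3_via_other:
  assumes d: "0 < d" "d \<le> r" and s: "0 < s"
    and "r \<le> d + ta" "ta < d / 2" "2 * ta \<le> s" "s \<le> ta + tb" "tb \<le> s + ta"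
  shows "Qdist d tb \<le> 3 * Qdist r s"
proof -
  have tb: "s / 2 \<le> tb" "tb \<le> 3 / 2 * s" and r: "r \<le> 3 / 2 * d"
    using assms by auto
  have "ln (tb / d) = ln (tb / s) + ln (s / r) + ln (r / d)"
    using tb s d by (simp add: ln_div)
  moreover have "\<bar>ln (tb / s)\<bar> \<le> ln 2" "\<bar>ln (r / d)\<bar> \<le> ln 2"
    using tb s r d by (intro abs_ln_le_ln2; simp add: field_simps)+
  ultimately have "\<bar>ln (tb / d)\<bar> \<le> 2 + \<bar>ln (s / r)\<bar>"
    using ln_2_less_1 by linarith
  then have "Qdist d tb \<le> d * (3 + \<bar>ln (s / r)\<bar>)"
    using d by (simp add: Qdist_def)
  also have "\<dots> \<le> r * (3 + \<bar>ln (s / r)\<bar>)"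
    using d by (intro mult_right_mono) auto
  also have "\<dots> \<le> 3 * Qdist r s"
    using d by (simp add: Qdist_def algebra_simps)
  finally show ?thesis .
qed

lemma Qdist_le_3_near:
  assumes d: "0 < d" "d \<le> r" and s: "0 < s" and t: "t < d / 2" "s < 2 * t"
  shows "Qdist d t \<le> 3 * Qdist r s"
proof -
  have "0 < t" "s < d"
    using s t by auto
  then have "\<bar>ln (t / d)\<bar> = ln d - ln t" "\<bar>ln (s / r)\<bar> = ln r - ln s"
    using d t s by (simp_all add: ln_div)
  moreover have "ln s < ln (2 * t)" "ln d \<le> ln r"
    using \<open>0 < t\<close> d s t by simp_all
  moreover have "ln (2 * t) = ln 2 + ln t"
    using \<open>0 < t\<close> by (intro ln_mult_pos) auto
  ultimately have "\<bar>ln (t / d)\<bar> \<le> 1 + \<bar>ln (s / r)\<bar>"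
    using ln_2_less_1 by linarith
  then have "Qdist d t \<le> d * (2 + \<bar>ln (s / r)\<bar>)"
    using d by (simp add: Qdist_def)
  also have "\<dots> \<le> r * (2 + \<bar>ln (s / r)\<bar>)"
    using d by (intro mult_right_mono) auto
  also have "\<dots> \<le> 3 * Qdist r s"
    using d by (simp add: Qdist_def algebra_simps)
  finally show ?thesis .
qed

text \<open>Used with d = |z - a0|, r = |z - a|, s = |a - b|, ta = |a - a0|, tb = |b - a0|, where a0 is
a boundary point closest to z; the hypotheses are triangle inequalities.\<close>

lemma Qdist_triangle_estimate:
  assumes d: "0 < d" "d \<le> r" and s: "0 < s"
    and "r \<le> d + ta" "ta \<le> d + r" "s \<le> ta + tb" "tb \<le> s + ta"
  shows "\<exists>t\<in>{ta, tb}. 0 < t \<and> Qdist d t \<le> 3 * Qdist r s"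
proof (cases "d / 2 \<le> ta")
  case True
  then show ?thesis
    using Qdist_le_3_far assms by force
next
  case False
  show ?thesis
  proof (cases "2 * ta \<le> s")
    case True
    then have "0 < tb"
      using assms by linarith
    then show ?thesis
      using Qdist_le_3_via_other[of d r s ta tb] True False assms by auto
  next
    case False
    then show ?thesis
      using Qdist_le_3_near[of d r s ta] \<open>\<not> d / 2 \<le> ta\<close> assms by auto
  qed
qed

section \<open>Pointwise comparison of the densities\<close>

lemma frontier_of_open_disjoint:
  "openin (Euclidean_space n) D \<Longrightarrow> x \<in> bdry n D \<Longrightarrow> x \<notin> D"
  by (simp add: bdry_def frontier_of_openin)

lemma bdry_subset_compl: "openin (Euclidean_space n) D \<Longrightarrow> bdry n D \<subseteq> compl n D"
  using frontier_of_open_disjoint frontier_of_subset_topspace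
  by (fastforce simp: compl_def bdry_def)

lemma exists_closest_bdry_point:
  assumes D: "openin (Euclidean_space n) D" and z: "z \<in> D" and x: "x \<in> compl n D"
  shows "\<exists>a0\<in>bdry n D. \<forall>b\<in>bdry n D. edist n z a0 \<le> edist n z b"
proof -
  have "z \<in> Rn n"
    using D z openin_subset by blast
  then obtain q where "q \<in> bdry n D"
    using segment_meets_frontier_of[OF z] x by (auto simp: compl_def bdry_def)
  moreover have "closedin (Euclidean_space n) (bdry n D)"
    by (simp add: bdry_def closedin_frontier_of)
  ultimately show ?thesis
    using closest_point_exists by metis
qed

lemma edist_bdry_pos:
  assumes D: "openin (Euclidean_space n) D" and z: "z \<in> D" and a0: "a0 \<in> bdry n D"
  shows "0 < edist n z a0"
proof (rule edist_pos)
  show "z \<in> Rn n"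
    using D z openin_subset by blast
  show "a0 \<in> Rn n"
    using a0 bdry_subset_compl[OF D] by (auto simp: compl_def)
  show "z \<noteq> a0"
    using frontier_of_open_disjoint[OF D a0] z by blast
qed

lemma closest_bdry_point_le_compl:
  assumes D: "openin (Euclidean_space n) D" and z: "z \<in> D"
    and closest: "\<forall>b\<in>bdry n D. edist n z a0 \<le> edist n z b" and x: "x \<in> compl n D"
  shows "edist n z a0 \<le> edist n z x"
proof -
  have "z \<in> Rn n"
    using D z openin_subset by blast
  then obtain q where "q \<in> bdry n D" "edist n z q \<le> edist n z x"
    using segment_meets_frontier_of[OF z] x by (auto simp: compl_def bdry_def)
  then show ?thesis
    using closest by force
qed

lemma exists_Qdist_le_3_Qf:
  assumes d: "0 < edist n z a0" "edist n z a0 \<le> edist n z a" and s: "0 < edist n a b"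
  shows "\<exists>c\<in>{a, b}. 0 < edist n c a0 \<and> Qdist (edist n z a0) (edist n c a0) \<le> 3 * Qf n z a b"
proof -
  have "edist n z a \<le> edist n z a0 + edist n a a0"
    using edist_triangle[of n z a a0] edist_commute[of n a0 a] by simp
  moreover have "edist n a a0 \<le> edist n z a0 + edist n z a"
    using edist_triangle[of n a a0 z] edist_commute[of n a z] by simp
  moreover have "edist n a b \<le> edist n a a0 + edist n b a0"
    using edist_triangle[of n a b a0] edist_commute[of n a0 b] by simp
  moreover have "edist n b a0 \<le> edist n a b + edist n a a0"
    using edist_triangle[of n b a0 a] edist_commute[of n b a] by simp
  ultimately obtain t where "t \<in> {edist n a a0, edist n b a0}" "0 < t"
    "Qdist (edist n z a0) t \<le> 3 * Qdist (edist n z a) (edist n a b)"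
    using Qdist_triangle_estimate[OF d s] by blast
  then show ?thesis
    by (auto simp: Qf_eq_Qdist)
qed

lemma Qf_closest_bdry_point_le:
  assumes n: "2 \<le> n" and D: "openin (Euclidean_space n) D" and z: "z \<in> D"
    and a0: "a0 \<in> bdry n D" and closest: "\<forall>b\<in>bdry n D. edist n z a0 \<le> edist n z b"
    and ab: "a \<in> compl n D" "b \<in> compl n D" "a \<noteq> b"
  shows "\<exists>b'\<in>bdry n D. b' \<noteq> a0 \<and> Qf n z a0 b' \<le> 3 * Qf n z a b"
proof -
  define d where "d = edist n z a0"
  have d: "0 < d"
    using edist_bdry_pos[OF D z a0] by (simp add: d_def)
  have "0 < edist n a b"
    using edist_pos ab by (auto simp: compl_def)
  then obtain c where c: "c \<in> compl n D" "0 < edist n c a0"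
    and Qc: "Qdist d (edist n c a0) \<le> 3 * Qf n z a b"
    using exists_Qdist_le_3_Qf[of n z a0 a b] closest_bdry_point_le_compl[OF D z closest ab(1)] d ab
    by (auto simp: d_def)
  obtain b' where b': "b' \<in> bdry n D" "min d (edist n c a0) \<le> edist n b' a0"
    "edist n b' a0 \<le> max d (edist n c a0)"
    using frontier_point_at_intermediate_distance[OF n z, of c a0] c d D z a0
      bdry_subset_compl[OF D] openin_subset[OF D]
    by (fastforce simp: compl_def bdry_def d_def)
  have "b' \<noteq> a0"
    using b'(2) d c(2) by auto
  moreover have "Qf n z a0 b' \<le> 3 * Qf n z a b"
    using Qdist_le_between[OF d c(2) b'(2,3)] Qc
    by (simp add: Qf_eq_Qdist d_def edist_commute[of n a0 b'])
  ultimately show ?thesis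
    using b'(1) by blast
qed

lemma one_div_Inf_nested_bounds:
  fixes S T U :: "real set"
  assumes "S \<subseteq> T" "T \<subseteq> U" "S \<noteq> {}" and d: "0 < d" "\<forall>x\<in>U. d \<le> x"
    and k: "0 < k" "\<forall>x\<in>U. \<exists>y\<in>S. y \<le> k * x"
  shows "0 < 1 / Inf S" "1 / Inf S \<le> 1 / Inf T" "1 / Inf T \<le> 1 / Inf U"
    "1 / Inf U \<le> k * (1 / Inf S)"
proof -
  have bdd: "bdd_below X" if "X \<subseteq> U" for X
    using that d(2) by (auto simp: bdd_below_def)
  have Inf_ge: "d \<le> Inf X" if "X \<subseteq> U" "X \<noteq> {}" for X
    using that d(2) by (intro cInf_greatest) auto
  have "S \<subseteq> U" "T \<noteq> {}" "U \<noteq> {}"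
    using assms(1-3) by auto
  then have pos: "0 < Inf S" "0 < Inf T" "0 < Inf U"
    using Inf_ge[OF \<open>S \<subseteq> U\<close> assms(3)] Inf_ge[OF assms(2)] Inf_ge[OF order_refl] d(1)
    by fastforce+
  then show "0 < 1 / Inf S"
    by simp
  have "Inf T \<le> Inf S" "Inf U \<le> Inf T"
    using assms(1-3) bdd \<open>T \<noteq> {}\<close> by (auto intro!: cInf_superset_mono)
  then show "1 / Inf S \<le> 1 / Inf T" "1 / Inf T \<le> 1 / Inf U"
    using pos by (auto intro!: divide_left_mono)
  have "Inf S / k \<le> Inf U"
  proof (rule cInf_greatest[OF \<open>U \<noteq> {}\<close>])
    fix x assume "x \<in> U"
    then obtain y where "y \<in> S" "y \<le> k * x"
      using k(2) by blast
    then show "Inf S / k \<le> x"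
      using cInf_lower[OF _ bdd] assms(1,2) k(1) by (fastforce simp: divide_le_eq mult.commute)
  qed
  then have "1 / Inf U \<le> 1 / (Inf S / k)"
    using pos k(1) by (intro divide_left_mono mult_pos_pos) auto
  then show "1 / Inf U \<le> k * (1 / Inf S)"
    by simp
qed

lemma lam_pointwise_bounds:
  assumes n: "2 \<le> n" and D: "openin (Euclidean_space n) D"
    and ab: "a \<in> compl n D" "b \<in> compl n D" "a \<noteq> b" and z: "z \<in> D"
  shows "0 \<le> lam'' n D z" "lam'' n D z \<le> lam' n D z" "lam' n D z \<le> lam n D z"
    "lam n D z \<le> 3 * lam'' n D z"
proof -
  obtain a0 where a0: "a0 \<in> bdry n D"
    and closest: "\<forall>b\<in>bdry n D. edist n z a0 \<le> edist n z b"
    using exists_closest_bdry_point[OF D z ab(1)] by blast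
  have "setdist_pt n z (bdry n D) = edist n z a0"
    unfolding setdist_pt_def by (rule cInf_eq_minimum) (use a0 closest in auto)
  define Qc where "Qc = {Qf n z a b | a b. a \<in> compl n D \<and> b \<in> compl n D \<and> a \<noteq> b}"
  define Qb where "Qb = {Qf n z a b | a b. a \<in> bdry n D \<and> b \<in> bdry n D \<and> a \<noteq> b}"
  define Qn where "Qn = {Qf n z a b | a b. a \<in> bdry n D \<and> b \<in> bdry n D \<and> a \<noteq> b
                                        \<and> edist n z a = setdist_pt n z (bdry n D)}"
  have lam: "lam n D z = 1 / Inf Qc" "lam' n D z = 1 / Inf Qb" "lam'' n D z = 1 / Inf Qn"
    by (simp_all add: lam_def lam'_def lam''_def Qc_def Qb_def Qn_def)
  have Qn_Qb: "Qn \<subseteq> Qb" and Qb_Qc: "Qb \<subseteq> Qc"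
    using bdry_subset_compl[OF D] by (auto simp: Qn_def Qb_def Qc_def)
  have Qc_lower: "\<forall>x\<in>Qc. edist n z a0 \<le> x"
  proof
    fix x assume "x \<in> Qc"
    then obtain a b where "a \<in> compl n D" "x = Qf n z a b"
      by (auto simp: Qc_def)
    then show "edist n z a0 \<le> x"
      using closest_bdry_point_le_compl[OF D z closest] le_Qdist[of "edist n z a" "edist n a b"]
      by (fastforce simp: Qf_eq_Qdist)
  qed
  have Qn_le_Qc: "\<forall>x\<in>Qc. \<exists>y\<in>Qn. y \<le> 3 * x"
  proof
    fix x assume "x \<in> Qc"
    then obtain a b where "a \<in> compl n D" "b \<in> compl n D" "a \<noteq> b" "x = Qf n z a b"
      by (auto simp: Qc_def)
    then obtain b' where "b' \<in> bdry n D" "b' \<noteq> a0" "Qf n z a0 b' \<le> 3 * x"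
      using Qf_closest_bdry_point_le[OF n D z a0 closest] by blast
    moreover have "Qf n z a0 b' \<in> Qn"
      unfolding Qn_def using calculation a0 \<open>setdist_pt n z (bdry n D) = edist n z a0\<close> by auto
    ultimately show "\<exists>y\<in>Qn. y \<le> 3 * x"
      by blast
  qed
  have "Qn \<noteq> {}"
    using Qn_le_Qc ab by (auto simp: Qc_def)
  note bounds = one_div_Inf_nested_bounds[OF Qn_Qb Qb_Qc \<open>Qn \<noteq> {}\<close> edist_bdry_pos[OF D z a0]
      Qc_lower _ Qn_le_Qc]
  show "0 \<le> lam'' n D z" "lam'' n D z \<le> lam' n D z" "lam' n D z \<le> lam n D z"
    "lam n D z \<le> 3 * lam'' n D z"
    using bounds unfolding lam by simp_all
qed

section \<open>Line integrals\<close>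

lemma nn_integral_cmult_le:
  fixes c :: real
  assumes c: "0 < c"
  shows "(\<integral>\<^sup>+x. ennreal c * f x \<partial>M) \<le> ennreal c * integral\<^sup>N M f"
  unfolding nn_integral_def
proof (rule SUP_least)
  fix g assume "g \<in> {g. simple_function M g \<and> g \<le> (\<lambda>x. ennreal c * f x)}"
  then have g: "simple_function M g" "\<And>x. g x \<le> ennreal c * f x"
    by (auto simp: le_fun_def)
  define h where "h = (\<lambda>x. g x * ennreal (1 / c))"
  have cc: "ennreal c * ennreal (1 / c) = 1"
    using c by (simp flip: ennreal_mult)
  have h: "simple_function M h"
    unfolding h_def using g(1) by (rule simple_function_compose1)
  have "h \<le> f"
  proof (rule le_funI)
    fix x
    have "h x \<le> ennreal c * f x * ennreal (1 / c)"
      unfolding h_def by (intro mult_right_mono g(2)) simp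
    also have "\<dots> = f x"
      using cc by (metis mult.assoc mult.commute mult.right_neutral)
    finally show "h x \<le> f x" .
  qed
  have "g = (\<lambda>x. ennreal c * h x)"
    unfolding h_def fun_eq_iff by (metis cc mult.assoc mult.commute mult.right_neutral)
  then have "integral\<^sup>S M g = ennreal c * integral\<^sup>S M h"
    using h by simp
  also have "\<dots> \<le> ennreal c * (SUP g \<in> {g. simple_function M g \<and> g \<le> f}. integral\<^sup>S M g)"
    using h \<open>h \<le> f\<close> by (intro mult_left_mono SUP_upper) auto
  finally show "integral\<^sup>S M g \<le> ennreal c * (SUP g \<in> {g. simple_function M g \<and> g \<le> f}. integral\<^sup>S M g)" .
qed

lemma line_int_mono:
  assumes "\<And>t. t \<in> {0..1} \<Longrightarrow> \<rho>1 (g t) \<le> \<rho>2 (g t)"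
  shows "line_int n \<rho>1 g \<le> line_int n \<rho>2 g"
  unfolding line_int_def
  by (rule nn_integral_mono) (use assms in \<open>auto simp: indicator_def ennreal_leI\<close>)

lemma line_int_cmult_le:
  assumes k: "0 < k" and nonneg: "\<And>t. t \<in> {0..1} \<Longrightarrow> 0 \<le> \<rho> (g t)"
  shows "line_int n (\<lambda>x. k * \<rho> x) g \<le> ennreal k * line_int n \<rho> g"
proof -
  have "line_int n (\<lambda>x. k * \<rho> x) g
      = (\<integral>\<^sup>+ t. ennreal k * (ennreal (\<rho> (g t)) * indicator {0..1} t) \<partial>interval_measure (arclen n g))"
    unfolding line_int_def
    by (intro nn_integral_cong) (use k nonneg in \<open>auto simp: indicator_def ennreal_mult\<close>)
  also have "\<dots> \<le> ennreal k * line_int n \<rho> g"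
    unfolding line_int_def using k by (rule nn_integral_cmult_le)
  finally show ?thesis .
qed

lemma joins_image_subset: "g \<in> joins n D z w \<Longrightarrow> t \<in> {0..1} \<Longrightarrow> g t \<in> D"
  by (auto simp: joins_def)

lemma dist_rho_mono:
  assumes "\<And>x. x \<in> D \<Longrightarrow> \<rho>1 x \<le> \<rho>2 x"
  shows "dist_rho n D \<rho>1 z w \<le> dist_rho n D \<rho>2 z w"
  unfolding dist_rho_def
proof (rule INF_mono)
  fix g assume g: "g \<in> joins n D z w"
  then have "line_int n \<rho>1 g \<le> line_int n \<rho>2 g"
    by (intro line_int_mono assms joins_image_subset)
  with g show "\<exists>g'\<in>joins n D z w. line_int n \<rho>1 g' \<le> line_int n \<rho>2 g"
    by blast
qed

lemma dist_rho_cmult_le: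
  assumes k: "0 < k" and nonneg: "\<And>x. x \<in> D \<Longrightarrow> 0 \<le> \<rho> x"
  shows "dist_rho n D (\<lambda>x. k * \<rho> x) z w \<le> ennreal k * dist_rho n D \<rho> z w"
proof -
  define k' where "k' = ennreal (1 / k)"
  have kk': "ennreal k * k' = 1"
    using k by (simp add: k'_def flip: ennreal_mult)
  have "k' * dist_rho n D (\<lambda>x. k * \<rho> x) z w \<le> dist_rho n D \<rho> z w"
    unfolding dist_rho_def
  proof (rule INF_greatest)
    fix g assume g: "g \<in> joins n D z w"
    then have "line_int n (\<lambda>x. k * \<rho> x) g \<le> ennreal k * line_int n \<rho> g"
      by (intro line_int_cmult_le k nonneg joins_image_subset)
    then have "k' * line_int n (\<lambda>x. k * \<rho> x) g \<le> line_int n \<rho> g"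
      using mult_left_mono[of _ _ k'] kk' by (fastforce simp: mult.assoc[symmetric] mult.commute[of k'])
    moreover have "k' * (INF g\<in>joins n D z w. line_int n (\<lambda>x. k * \<rho> x) g)
        \<le> k' * line_int n (\<lambda>x. k * \<rho> x) g"
      using g by (intro mult_left_mono INF_lower) auto
    ultimately show "k' * (INF g\<in>joins n D z w. line_int n (\<lambda>x. k * \<rho> x) g) \<le> line_int n \<rho> g"
      by (rule order_trans[rotated])
  qed
  then have "ennreal k * (k' * dist_rho n D (\<lambda>x. k * \<rho> x) z w) \<le> ennreal k * dist_rho n D \<rho> z w"
    by (rule mult_left_mono) simp
  then show ?thesis
    using kk' by (simp add: mult.assoc[symmetric])
qed

theorem lemma6:
  shows "\<exists>C0>0. \<forall>n\<ge>2. \<forall>D. domain_in n D \<and> (\<exists>a b. a \<in> compl n D \<and> b \<in> compl n D \<and> a \<noteq> b) \<longrightarrow>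
     (\<forall>z\<in>D. \<forall>w\<in>D.
        dist_rho n D (lam'' n D) z w \<le> dist_rho n D (lam' n D) z w \<and>
        dist_rho n D (lam' n D) z w \<le> dist_rho n D (lam n D) z w \<and>
        dist_rho n D (lam n D) z w \<le> ennreal C0 * dist_rho n D (lam'' n D) z w)"
proof (intro exI[of _ "3::real"] conjI allI impI ballI)
  fix n :: nat and D z w
  assume n: "2 \<le> n" and "domain_in n D \<and> (\<exists>a b. a \<in> compl n D \<and> b \<in> compl n D \<and> a \<noteq> b)"
  then obtain a b where D: "openin (Euclidean_space n) D"
    and ab: "a \<in> compl n D" "b \<in> compl n D" "a \<noteq> b"
    by (auto simp: domain_in_def)
  note bounds = lam_pointwise_bounds[OF n D ab]
  show "dist_rho n D (lam'' n D) z w \<le> dist_rho n D (lam' n D) z w"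
    by (rule dist_rho_mono) (rule bounds(2))
  show "dist_rho n D (lam' n D) z w \<le> dist_rho n D (lam n D) z w"
    by (rule dist_rho_mono) (rule bounds(3))
  have "dist_rho n D (lam n D) z w \<le> dist_rho n D (\<lambda>x. 3 * lam'' n D x) z w"
    by (rule dist_rho_mono) (rule bounds(4))
  also have "\<dots> \<le> ennreal 3 * dist_rho n D (lam'' n D) z w"
    by (rule dist_rho_cmult_le) (simp_all add: bounds(1))
  finally show "dist_rho n D (lam n D) z w \<le> ennreal 3 * dist_rho n D (lam'' n D) z w" .
qed simp

end
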